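(* Let $X \in \mathbb{R}^{N\times D}$ and $y \in \mathbb{R}^N$, and suppose the rows of $X$ (with corresponding entries of $y$) are partitioned into $E$ subsets, giving blocks $X_i \in \mathbb{R}^{N_i \times D}$, $y_i\in\mathbb{R}^{N_i}$ for $i\in[E]$, so that $X^\top X = \sum_i X_i^\top X_i$ and $X^\top y = \sum_i X_i^\top y_i$. Let $$w^* = (X^\top X)^{\dagger} X^\top y, \qquad w_i^* = (X_i^\top X_i)^{\dagger} X_i^\top y_i \quad (i\in[E]),$$ the minimum-norm least-squares solutions of $\min_w \|Xw-y\|^2$ and $\min_{w_i}\|X_iw_i-y_i\|^2$ respectively. Let $U_1,\dots,U_E$ be matrices with orthonormal columns whose column spaces are mutually orthogonal subspaces of $\mathbb{R}^D$ with $\sum_{i=1}^E U_iU_i^\top = I_D$. Let $\epsilon_1 \ge 0$ be such that $$\big\|U_iU_i^\top (X^\top X)^{\dagger} - (X_i^\top X_i)^{\dagger}\big\|_2 \le \epsilon_1 \quad\text{for all } i\in[E],$$ and let $\epsilon_2\ge 0$ be such that for all $i\neq j$ and every $z$ in the column space of $X_j^\top$, $\|(X_i^\top X_i)^{\dagger} z\| \le \epsilon_2\|z\|$. Then $$\|w^*\|^2 \ge \sum_{i=1}^E \Big( \Big\lfloor \|w_i^*\| - \epsilon_1 \|X^\top y\| - \epsilon_2 \sum_{j\neq i}\|X_j^\top y_j\| \Big\rfloor_+\Big)^2,$$ where $\lfloor a\rfloor_+ = \max(a,0)$.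
   Context: $^{\dagger}$ denotes the Moore–Penrose pseudo-inverse, $\|\cdot\|$ the Euclidean norm on vectors, and $\|\cdot\|_2$ the spectral norm on matrices. $[E]=\{1,\dots,E\}$. The Lipschitz constant of the linear map $x\mapsto \langle w,x\rangle$ is $\|w\|$; $w^*$ represents a dense linear model and $w_i^*$ the linear expert $i$ under fixed routing of subset $i$ to expert $i$. *)

theory Defs
  imports "HOL-Analysis.Analysis"
begin

definition pinv :: "real^'m^'n \<Rightarrow> real^'n^'m" where
  "pinv A = (THE B. A ** B ** A = A \<and> B ** A ** B = B \<and>
                    transpose (A ** B) = A ** B \<and> transpose (B ** A) = B ** A)"

definition spec_norm :: "real^'m^'n \<Rightarrow> real" where
  "spec_norm M = onorm (\<lambda>x. M *v x)"

definition outer :: "real^'d \<Rightarrow> real^'d \<Rightarrow> real^'d^'d" where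
  "outer u v = (\<chi> r s. u $ r * v $ s)"

text \<open>Block i of the rows (rows not in block i are set to zero; this gives the same
  Gram matrix X_i^T X_i, vector X_i^T y_i and row space as the block itself).\<close>
definition blockM :: "('n \<Rightarrow> nat) \<Rightarrow> nat \<Rightarrow> real^'d^'n \<Rightarrow> real^'d^'n" where
  "blockM p i X = (\<chi> r. if p r = i then X $ r else 0)"

definition blockV :: "('n \<Rightarrow> nat) \<Rightarrow> nat \<Rightarrow> real^'n \<Rightarrow> real^'n" where
  "blockV p i y = (\<chi> r. if p r = i then y $ r else 0)"

definition pos_part :: "real \<Rightarrow> real" where
  "pos_part a = max a 0"

end

theory Submission imports Defs begin

text \<open>Each \<open>P\<^sub>i = U\<^sub>i U\<^sub>i\<^sup>T\<close> is an orthogonal projector and the \<open>P\<^sub>i\<close> sum to the identity, so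
  \<open>\<parallel>w*\<parallel>\<^sup>2 = \<Sum>\<^sub>i \<parallel>P\<^sub>i w*\<parallel>\<^sup>2\<close>. Each summand is bounded below by splitting
  \<open>P\<^sub>i w* = (P\<^sub>i (X\<^sup>TX)\<^sup>\<dagger> - (X\<^sub>i\<^sup>TX\<^sub>i)\<^sup>\<dagger>) X\<^sup>Ty + (X\<^sub>i\<^sup>TX\<^sub>i)\<^sup>\<dagger> X\<^sub>i\<^sup>Ty\<^sub>i + \<Sum>\<^sub>j\<^sub>\<noteq>\<^sub>i (X\<^sub>i\<^sup>TX\<^sub>i)\<^sup>\<dagger> X\<^sub>j\<^sup>Ty\<^sub>j\<close>,
  using \<open>X\<^sup>Ty = \<Sum>\<^sub>j X\<^sub>j\<^sup>Ty\<^sub>j\<close>: the first term is at most \<open>\<epsilon>\<^sub>1\<parallel>X\<^sup>Ty\<parallel>\<close>, the middle one is \<open>w\<^sub>i*\<close>,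
  and each cross term is at most \<open>\<epsilon>\<^sub>2\<parallel>X\<^sub>j\<^sup>Ty\<^sub>j\<parallel>\<close> since \<open>X\<^sub>j\<^sup>Ty\<^sub>j\<close> lies in the column space of
  \<open>X\<^sub>j\<^sup>T\<close>.\<close>

lemma sum_matrix_vector_mult: "(\<Sum>i\<in>S. f i) *v v = (\<Sum>i\<in>S. f i *v v)"
  by (induction S rule: infinite_finite_induct) (auto simp: matrix_vector_mult_add_rdistrib)

lemma matrix_vector_mult_sum: "A *v (\<Sum>i\<in>S. f i) = (\<Sum>i\<in>S. A *v f i)"
  by (induction S rule: infinite_finite_induct) (auto simp: matrix_vector_right_distrib)

lemma outer_mult_vector: "outer u w *v v = (w \<bullet> v) *\<^sub>R u"
  by (simp add: outer_def matrix_vector_mult_def vec_eq_iff inner_vec_def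
      sum_distrib_left mult.commute mult.left_commute)

lemma norm_matrix_vector_mult_le_spec_norm: "norm (M *v v) \<le> spec_norm M * norm v"
  unfolding spec_norm_def by (rule onorm) simp

lemma inner_projector_eq_norm_square:
  fixes u :: "nat \<Rightarrow> real^'d"
  assumes orthonormal: "\<And>a b. a < K \<Longrightarrow> b < K \<Longrightarrow> u a \<bullet> u b = (if a = b then 1 else 0)"
  shows "v \<bullet> ((\<Sum>c<K. outer (u c) (u c)) *v v) = (norm ((\<Sum>c<K. outer (u c) (u c)) *v v))\<^sup>2"
proof -
  have Pv: "(\<Sum>c<K. outer (u c) (u c)) *v v = (\<Sum>c<K. (u c \<bullet> v) *\<^sub>R u c)"
    by (simp add: sum_matrix_vector_mult outer_mult_vector)
  have "(norm (\<Sum>c<K. (u c \<bullet> v) *\<^sub>R u c))\<^sup>2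
      = (\<Sum>a<K. \<Sum>b<K. (u a \<bullet> v) * (u b \<bullet> v) * (u b \<bullet> u a))"
    by (simp add: power2_norm_eq_inner inner_sum_left inner_sum_right sum_distrib_left mult.assoc)
  also have "\<dots> = (\<Sum>a<K. (u a \<bullet> v) * (u a \<bullet> v))"
    by (rule sum.cong[OF refl]) (simp add: orthonormal if_distrib sum.delta sum.delta' cong: if_cong)
  also have "\<dots> = v \<bullet> (\<Sum>c<K. (u c \<bullet> v) *\<^sub>R u c)"
    by (simp add: inner_sum_right inner_commute)
  finally show ?thesis
    using Pv by simp
qed

lemma norm_square_eq_sum_projections:
  fixes P :: "nat \<Rightarrow> real^'d^'d"
  assumes resolution: "(\<Sum>i\<in>I. P i) = mat 1"
    and projector: "\<And>i. i \<in> I \<Longrightarrow> v \<bullet> (P i *v v) = (norm (P i *v v))\<^sup>2"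
  shows "(norm v)\<^sup>2 = (\<Sum>i\<in>I. (norm (P i *v v))\<^sup>2)"
proof -
  have "(norm v)\<^sup>2 = v \<bullet> ((\<Sum>i\<in>I. P i) *v v)"
    by (simp add: resolution power2_norm_eq_inner)
  also have "\<dots> = (\<Sum>i\<in>I. v \<bullet> (P i *v v))"
    by (simp add: sum_matrix_vector_mult inner_sum_right)
  finally show ?thesis
    using projector by simp
qed

lemma transpose_mult_vector_eq_sum_blocks:
  fixes X :: "real^'d^'n" and y :: "real^'n"
  assumes "\<And>r. p r \<in> I" and "finite I"
  shows "transpose X *v y = (\<Sum>i\<in>I. transpose (blockM p i X) *v blockV p i y)"
proof -
  have "(\<Sum>i\<in>I. transpose (blockM p i X) *v blockV p i y) $ d
      = (\<Sum>i\<in>I. \<Sum>r\<in>UNIV. if p r = i then X$r$d * y$r else 0)" for d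
    by (simp add: sum_component matrix_vector_mult_def transpose_def blockM_def blockV_def
        if_distrib cong: if_cong)
  also have "\<dots> d = (\<Sum>r\<in>UNIV. \<Sum>i\<in>I. if p r = i then X$r$d * y$r else 0)" for d
    by (rule sum.swap)
  also have "\<dots> d = (transpose X *v y) $ d" for d
    using assms by (simp add: sum.delta' matrix_vector_mult_def transpose_def)
  finally show ?thesis
    by (simp add: vec_eq_iff)
qed

lemma norm_projection_lower_bound:
  assumes approx: "spec_norm (P ** A - Ai) \<le> \<epsilon>1"
    and split: "b = bi + (\<Sum>j\<in>J. c j)"
    and cross: "\<And>j. j \<in> J \<Longrightarrow> norm (Ai *v c j) \<le> \<epsilon>2 * norm (c j)"
  shows "norm (Ai *v bi) - \<epsilon>1 * norm b - \<epsilon>2 * (\<Sum>j\<in>J. norm (c j)) \<le> norm (P *v (A *v b))"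
proof -
  have approx_err: "norm (P *v (A *v b) - Ai *v b) \<le> \<epsilon>1 * norm b"
  proof -
    have "norm (P *v (A *v b) - Ai *v b) = norm ((P ** A - Ai) *v b)"
      by (simp add: matrix_vector_mult_diff_rdistrib matrix_vector_mul_assoc)
    also have "\<dots> \<le> spec_norm (P ** A - Ai) * norm b"
      by (rule norm_matrix_vector_mult_le_spec_norm)
    also have "\<dots> \<le> \<epsilon>1 * norm b"
      using approx by (simp add: mult_right_mono)
    finally show ?thesis .
  qed
  have cross_err: "norm (\<Sum>j\<in>J. Ai *v c j) \<le> \<epsilon>2 * (\<Sum>j\<in>J. norm (c j))"
  proof -
    have "norm (\<Sum>j\<in>J. Ai *v c j) \<le> (\<Sum>j\<in>J. norm (Ai *v c j))"
      by (rule norm_sum)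
    also have "\<dots> \<le> (\<Sum>j\<in>J. \<epsilon>2 * norm (c j))"
      by (rule sum_mono) (rule cross)
    finally show ?thesis
      by (simp add: sum_distrib_left)
  qed
  have "Ai *v bi = Ai *v b - (\<Sum>j\<in>J. Ai *v c j)"
    by (simp add: split matrix_vector_right_distrib matrix_vector_mult_sum)
  then have "norm (Ai *v bi) \<le> norm (Ai *v b) + norm (\<Sum>j\<in>J. Ai *v c j)"
    by (simp add: norm_triangle_ineq4)
  moreover have "norm (Ai *v b) \<le> norm (P *v (A *v b)) + norm (P *v (A *v b) - Ai *v b)"
    using norm_triangle_ineq4[of "P *v (A *v b)" "P *v (A *v b) - Ai *v b"] by simp
  ultimately show ?thesis
    using approx_err cross_err by linarith
qed

lemma pos_part_square_le: "a \<le> c \<Longrightarrow> 0 \<le> c \<Longrightarrow> (pos_part a)\<^sup>2 \<le> c\<^sup>2"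
  by (simp add: pos_part_def power_mono)

theorem theorem1:
  fixes X :: "real^'d^'n" and y :: "real^'n"
    and E :: nat and p :: "'n \<Rightarrow> nat"
    and U :: "nat \<Rightarrow> nat \<Rightarrow> real^'d" and k :: "nat \<Rightarrow> nat"
    and \<epsilon>1 \<epsilon>2 :: real
  assumes part: "\<And>r. p r \<in> {1..E}"
    and part_ne: "\<And>i. i \<in> {1..E} \<Longrightarrow> \<exists>r. p r = i"
    and U_orthonormal: "\<And>i a b. i \<in> {1..E} \<Longrightarrow> a < k i \<Longrightarrow> b < k i \<Longrightarrow>
                          U i a \<bullet> U i b = (if a = b then 1 else 0)"
    and U_orth: "\<And>i j a b. i \<in> {1..E} \<Longrightarrow> j \<in> {1..E} \<Longrightarrow> i \<noteq> j \<Longrightarrow>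
                          a < k i \<Longrightarrow> b < k j \<Longrightarrow> U i a \<bullet> U j b = 0"
    and U_sum: "(\<Sum>i\<in>{1..E}. \<Sum>c<k i. outer (U i c) (U i c)) = mat 1"
    and eps1_nonneg: "\<epsilon>1 \<ge> 0"
    and eps1: "\<And>i. i \<in> {1..E} \<Longrightarrow>
        spec_norm ((\<Sum>c<k i. outer (U i c) (U i c)) ** pinv (transpose X ** X)
                   - pinv (transpose (blockM p i X) ** blockM p i X)) \<le> \<epsilon>1"
    and eps2_nonneg: "\<epsilon>2 \<ge> 0"
    and eps2: "\<And>i j z. i \<in> {1..E} \<Longrightarrow> j \<in> {1..E} \<Longrightarrow> i \<noteq> j \<Longrightarrow>
        z \<in> span (columns (transpose (blockM p j X))) \<Longrightarrow>
        norm (pinv (transpose (blockM p i X) ** blockM p i X) *v z) \<le> \<epsilon>2 * norm z"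
  shows "(norm (pinv (transpose X ** X) *v (transpose X *v y)))\<^sup>2 \<ge>
    (\<Sum>i\<in>{1..E}. (pos_part
        (norm (pinv (transpose (blockM p i X) ** blockM p i X) *v
               (transpose (blockM p i X) *v blockV p i y))
         - \<epsilon>1 * norm (transpose X *v y)
         - \<epsilon>2 * (\<Sum>j\<in>{1..E} - {i}. norm (transpose (blockM p j X) *v blockV p j y))))\<^sup>2)"
proof -
  let ?w = "pinv (transpose X ** X) *v (transpose X *v y)"
  define P where "P i = (\<Sum>c<k i. outer (U i c) (U i c))" for i
  define b where "b i = transpose (blockM p i X) *v blockV p i y" for i
  have pythagoras: "(norm ?w)\<^sup>2 = (\<Sum>i\<in>{1..E}. (norm (P i *v ?w))\<^sup>2)"
    using U_sum U_orthonormal unfolding P_def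
    by (intro norm_square_eq_sum_projections inner_projector_eq_norm_square) auto
  have "norm (pinv (transpose (blockM p i X) ** blockM p i X) *v b i)
      - \<epsilon>1 * norm (transpose X *v y) - \<epsilon>2 * (\<Sum>j\<in>{1..E} - {i}. norm (b j))
      \<le> norm (P i *v ?w)" if i: "i \<in> {1..E}" for i
  proof (rule norm_projection_lower_bound)
    show "transpose X *v y = b i + (\<Sum>j\<in>{1..E} - {i}. b j)"
      using transpose_mult_vector_eq_sum_blocks[of p "{1..E}" X y] part i
      by (simp add: b_def sum.remove)
  next
    show "norm (pinv (transpose (blockM p i X) ** blockM p i X) *v b j) \<le> \<epsilon>2 * norm (b j)"
      if "j \<in> {1..E} - {i}" for j
      using that i eps2[of i j, OF _ _ _ matrix_vector_mult_in_columnspace] by (auto simp: b_def)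
  qed (use i eps1 in \<open>simp add: P_def\<close>)
  then show ?thesis
    unfolding pythagoras b_def by (intro sum_mono pos_part_square_le) auto
qed

end
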